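(* Let $(H,\leq,\ast)$ be a discrete $\omega$-dimensional poc-set and let $\Sigma\in\Re H$ have finite codimension $\delta>0$. Then there exists $\Sigma_1\in\Re H$ with $\Sigma_1<\Sigma$ and $\operatorname{codim}(\Sigma_1)=\delta-1$.
   Context: Poc-set: poset with minimum $0$ and order-reversing involution $\ast$ with $h\le h^\ast\Rightarrow h=0$. Discrete: intervals between proper elements finite. Transverse: none of $h\le k,h^\ast\le k,h\le k^\ast,h^\ast\le k^\ast$; $\omega$-dimensional: no infinite transverse subset. Ultrafilter: $\alpha\subseteq H$ with exactly one of $h,h^\ast$ in $\alpha$ for each $h$, no $h,k\in\alpha$ with $h\le k^\ast$; $H^\circ$ with topology from $2^H$. Almost-equality: finite difference. $\Re H$ is the set of almost-equality classes, partially ordered by $\Sigma_1\ge\Sigma_2$ iff $\Sigma_1\cap\overline{\Sigma_2}\ne\varnothing$ (closure in $H^\circ$). For chains $c=(c_n)$, $d=(d_m)$ (infinite strictly descending), $c$ dominates $d$ if for every $m$ there is $n$ with $c_n\le d_m$; $c\sim d$ if each dominates the other. The codimension of $\Sigma$ is the cardinality of the set of $\sim$-classes of infinite strictly descending chains contained in $\xi$, for any $\xi\in\Sigma$ (this is independent of $\xi$). *)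

theory Defs
  imports Main "HOL-Library.Extended_Nat"
begin

definition poc_set :: "'a set \<Rightarrow> ('a \<Rightarrow> 'a \<Rightarrow> bool) \<Rightarrow> 'a \<Rightarrow> ('a \<Rightarrow> 'a) \<Rightarrow> bool" where
  "poc_set H le z st \<longleftrightarrow>
     (\<forall>h\<in>H. le h h) \<and>
     (\<forall>h\<in>H. \<forall>k\<in>H. le h k \<and> le k h \<longrightarrow> h = k) \<and>
     (\<forall>h\<in>H. \<forall>k\<in>H. \<forall>l\<in>H. le h k \<and> le k l \<longrightarrow> le h l) \<and>
     z \<in> H \<and> (\<forall>h\<in>H. le z h) \<and>
     (\<forall>h\<in>H. st h \<in> H \<and> st (st h) = h) \<and>
     (\<forall>h\<in>H. \<forall>k\<in>H. le h k \<longrightarrow> le (st k) (st h)) \<and>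
     (\<forall>h\<in>H. le h (st h) \<longrightarrow> h = z)"

definition proper :: "'a set \<Rightarrow> 'a \<Rightarrow> ('a \<Rightarrow> 'a) \<Rightarrow> 'a \<Rightarrow> bool" where
  "proper H z st h \<longleftrightarrow> h \<in> H \<and> h \<noteq> z \<and> h \<noteq> st z"

definition discrete_poc :: "'a set \<Rightarrow> ('a \<Rightarrow> 'a \<Rightarrow> bool) \<Rightarrow> 'a \<Rightarrow> ('a \<Rightarrow> 'a) \<Rightarrow> bool" where
  "discrete_poc H le z st \<longleftrightarrow>
     (\<forall>h k. proper H z st h \<and> proper H z st k \<longrightarrow> finite {x\<in>H. le h x \<and> le x k})"

definition transverse :: "('a \<Rightarrow> 'a \<Rightarrow> bool) \<Rightarrow> ('a \<Rightarrow> 'a) \<Rightarrow> 'a \<Rightarrow> 'a \<Rightarrow> bool" where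
  "transverse le st h k \<longleftrightarrow>
     \<not> le h k \<and> \<not> le (st h) k \<and> \<not> le h (st k) \<and> \<not> le (st h) (st k)"

definition omega_dimensional :: "'a set \<Rightarrow> ('a \<Rightarrow> 'a \<Rightarrow> bool) \<Rightarrow> ('a \<Rightarrow> 'a) \<Rightarrow> bool" where
  "omega_dimensional H le st \<longleftrightarrow>
     \<not> (\<exists>T. T \<subseteq> H \<and> infinite T \<and> (\<forall>h\<in>T. \<forall>k\<in>T. h \<noteq> k \<longrightarrow> transverse le st h k))"

definition ultrafilter :: "'a set \<Rightarrow> ('a \<Rightarrow> 'a \<Rightarrow> bool) \<Rightarrow> ('a \<Rightarrow> 'a) \<Rightarrow> 'a set \<Rightarrow> bool" where
  "ultrafilter H le st \<alpha> \<longleftrightarrow>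
     \<alpha> \<subseteq> H \<and> (\<forall>h\<in>H. (h \<in> \<alpha>) \<noteq> (st h \<in> \<alpha>)) \<and>
     \<not> (\<exists>h\<in>\<alpha>. \<exists>k\<in>\<alpha>. le h (st k))"

definition ultrafilters :: "'a set \<Rightarrow> ('a \<Rightarrow> 'a \<Rightarrow> bool) \<Rightarrow> ('a \<Rightarrow> 'a) \<Rightarrow> 'a set set" where
  "ultrafilters H le st = {\<alpha>. ultrafilter H le st \<alpha>}"

text \<open>Closure in H-circ of a set S of ultrafilters, for the subspace topology
  induced from the product topology on 2^H (basic open sets are cylinders given by
  finitely many coordinates).\<close>
definition uclosure :: "'a set \<Rightarrow> ('a \<Rightarrow> 'a \<Rightarrow> bool) \<Rightarrow> ('a \<Rightarrow> 'a) \<Rightarrow> 'a set set \<Rightarrow> 'a set set" where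
  "uclosure H le st S = {\<xi> \<in> ultrafilters H le st.
     \<forall>F. finite F \<and> F \<subseteq> H \<longrightarrow> (\<exists>\<eta>\<in>S. \<eta> \<inter> F = \<xi> \<inter> F)}"

definition almost_eq :: "'a set \<Rightarrow> 'a set \<Rightarrow> bool" where
  "almost_eq \<xi> \<eta> \<longleftrightarrow> finite ((\<xi> - \<eta>) \<union> (\<eta> - \<xi>))"

definition ReH :: "'a set \<Rightarrow> ('a \<Rightarrow> 'a \<Rightarrow> bool) \<Rightarrow> ('a \<Rightarrow> 'a) \<Rightarrow> 'a set set set" where
  "ReH H le st = {{\<eta> \<in> ultrafilters H le st. almost_eq \<xi> \<eta>} | \<xi>. \<xi> \<in> ultrafilters H le st}"

definition Re_le :: "'a set \<Rightarrow> ('a \<Rightarrow> 'a \<Rightarrow> bool) \<Rightarrow> ('a \<Rightarrow> 'a) \<Rightarrow> 'a set set \<Rightarrow> 'a set set \<Rightarrow> bool" where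
  "Re_le H le st S2 S1 \<longleftrightarrow> S1 \<inter> uclosure H le st S2 \<noteq> {}"

definition Re_less :: "'a set \<Rightarrow> ('a \<Rightarrow> 'a \<Rightarrow> bool) \<Rightarrow> ('a \<Rightarrow> 'a) \<Rightarrow> 'a set set \<Rightarrow> 'a set set \<Rightarrow> bool" where
  "Re_less H le st S2 S1 \<longleftrightarrow> Re_le H le st S2 S1 \<and> S2 \<noteq> S1"

definition desc_chains :: "('a \<Rightarrow> 'a \<Rightarrow> bool) \<Rightarrow> 'a set \<Rightarrow> (nat \<Rightarrow> 'a) set" where
  "desc_chains le \<xi> = {c. range c \<subseteq> \<xi> \<and> (\<forall>n. le (c (Suc n)) (c n) \<and> c (Suc n) \<noteq> c n)}"

definition dominates :: "('a \<Rightarrow> 'a \<Rightarrow> bool) \<Rightarrow> (nat \<Rightarrow> 'a) \<Rightarrow> (nat \<Rightarrow> 'a) \<Rightarrow> bool" where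
  "dominates le c d \<longleftrightarrow> (\<forall>m. \<exists>n. le (c n) (d m))"

definition chain_equiv :: "('a \<Rightarrow> 'a \<Rightarrow> bool) \<Rightarrow> (nat \<Rightarrow> 'a) \<Rightarrow> (nat \<Rightarrow> 'a) \<Rightarrow> bool" where
  "chain_equiv le c d \<longleftrightarrow> dominates le c d \<and> dominates le d c"

definition chain_classes :: "('a \<Rightarrow> 'a \<Rightarrow> bool) \<Rightarrow> 'a set \<Rightarrow> (nat \<Rightarrow> 'a) set set" where
  "chain_classes le \<xi> = {{d \<in> desc_chains le \<xi>. chain_equiv le c d} | c. c \<in> desc_chains le \<xi>}"

text \<open>Codimension of Sigma, computed at some element xi of Sigma (the paper shows
  this is independent of xi); infinite codimension is represented by infinity.\<close>
definition codim :: "('a \<Rightarrow> 'a \<Rightarrow> bool) \<Rightarrow> 'a set set \<Rightarrow> enat" where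
  "codim le S = (let \<xi> = (SOME \<xi>. \<xi> \<in> S) in
     if finite (chain_classes le \<xi>) then enat (card (chain_classes le \<xi>)) else \<infinity>)"

end

theory Submission
  imports Defs "HOL-Library.Ramsey"
begin

(* Pick an ultrafilter xi in Sigma. Domination preorders the finitely many classes of
   descending chains in xi; take a chain c whose class is maximal. For large K every chain
   of xi that gets below c K is equivalent to c, and then Ramsey's theorem, omega-dimensionality
   and discreteness show that the down-sets D k = {h in xi. h <= c k} shrink by finite steps
   from K on. Reversing xi on D k gives ultrafilters eta k which, for k >= K, are almost equal
   to eta K and converge to xi, while eta K is not almost equal to xi because D K is infinite.
   Up to tails the chains of eta K are the chains of xi avoiding D K, i.e. those not
   equivalent to c, so the class of eta K lies strictly below Sigma and has codimension
   delta - 1. *)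

definition ae_class :: "'a set \<Rightarrow> ('a \<Rightarrow> 'a \<Rightarrow> bool) \<Rightarrow> ('a \<Rightarrow> 'a) \<Rightarrow> 'a set \<Rightarrow> 'a set set" where
  "ae_class H le st \<xi> = {\<eta> \<in> ultrafilters H le st. almost_eq \<xi> \<eta>}"

definition chain_class :: "('a \<Rightarrow> 'a \<Rightarrow> bool) \<Rightarrow> 'a set \<Rightarrow> (nat \<Rightarrow> 'a) \<Rightarrow> (nat \<Rightarrow> 'a) set" where
  "chain_class le B c = {d \<in> desc_chains le B. chain_equiv le c d}"

definition chain_codim :: "('a \<Rightarrow> 'a \<Rightarrow> bool) \<Rightarrow> 'a set \<Rightarrow> enat" where
  "chain_codim le B =
     (if finite (chain_classes le B) then enat (card (chain_classes le B)) else \<infinity>)"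

lemma chain_classes_eq_image: "chain_classes le B = chain_class le B ` desc_chains le B"
  unfolding chain_classes_def chain_class_def by auto

lemma codim_eq_chain_codim: "codim le S = chain_codim le (SOME \<xi>. \<xi> \<in> S)"
  unfolding codim_def chain_codim_def Let_def ..

lemma almost_eq_refl: "almost_eq \<xi> \<xi>"
  by (simp add: almost_eq_def)

lemma almost_eq_sym: "almost_eq \<xi> \<eta> \<Longrightarrow> almost_eq \<eta> \<xi>"
  by (simp add: almost_eq_def Un_commute)

lemma ReH_eq_image: "ReH H le st = ae_class H le st ` ultrafilters H le st"
  unfolding ReH_def ae_class_def by auto

lemma bij_betw_images_same_kernel:
  assumes "\<And>x y. x \<in> D \<Longrightarrow> y \<in> D \<Longrightarrow> f x = f y \<longleftrightarrow> g x = g y"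
  shows "bij_betw (\<lambda>X. g (inv_into D f X)) (f ` D) (g ` D)"
proof -
  have img: "g (inv_into D f (f x)) = g x" if "x \<in> D" for x
    using assms that by (metis f_inv_into_f image_eqI inv_into_into)
  show ?thesis
  proof (rule bij_betw_imageI)
    show "inj_on (\<lambda>X. g (inv_into D f X)) (f ` D)"
      using img assms by (force intro: inj_onI)
    show "(\<lambda>X. g (inv_into D f X)) ` f ` D = g ` D"
      using img by (force simp: image_image)
  qed
qed

lemma inj_eventually_not_in:
  assumes "inj f" "finite F"
  shows "eventually (\<lambda>n. f n \<notin> F) sequentially"
  using finite_vimageI[OF assms(2,1)]
  by (simp add: cofinite_eq_sequentially[symmetric] eventually_cofinite vimage_def)

lemma infinite_total_upfinite_has_desc_chain:
  assumes total: "\<And>x y. x \<in> Y \<Longrightarrow> y \<in> Y \<Longrightarrow> le x y \<or> le y x"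
    and upfinite: "\<And>y. y \<in> Y \<Longrightarrow> finite {x \<in> Y. le y x}"
    and "infinite Y"
  shows "\<exists>e. range e \<subseteq> Y \<and> (\<forall>n. le (e (Suc n)) (e n) \<and> e (Suc n) \<noteq> e n)"
proof -
  have "\<exists>y'. y' \<in> Y \<and> le y' y \<and> y' \<noteq> y" if y: "y \<in> Y" for y
  proof -
    obtain y' where "y' \<in> Y" "\<not> le y y'"
      using upfinite[OF y] \<open>infinite Y\<close> by (metis (no_types, lifting) mem_Collect_eq subsetI finite_subset)
    then show ?thesis
      using total[OF y] total[OF y y] by metis
  qed
  moreover obtain y0 where "y0 \<in> Y"
    using \<open>infinite Y\<close> by (metis finite.emptyI ex_in_conv)
  ultimately obtain e where "\<forall>n. e n \<in> Y \<and> le (e (Suc n)) (e n) \<and> e (Suc n) \<noteq> e n"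
    using dependent_nat_choice[of "\<lambda>_ y. y \<in> Y" "\<lambda>_ y y'. le y' y \<and> y' \<noteq> y"] by metis
  then show ?thesis by blast
qed

locale pocset =
  fixes H :: "'a set" and le :: "'a \<Rightarrow> 'a \<Rightarrow> bool" and z :: 'a and st :: "'a \<Rightarrow> 'a"
  assumes poc_set: "poc_set H le z st"
begin

lemma poc_refl: "h \<in> H \<Longrightarrow> le h h"
  and poc_antisym: "h \<in> H \<Longrightarrow> k \<in> H \<Longrightarrow> le h k \<Longrightarrow> le k h \<Longrightarrow> h = k"
  and poc_trans: "h \<in> H \<Longrightarrow> k \<in> H \<Longrightarrow> l \<in> H \<Longrightarrow> le h k \<Longrightarrow> le k l \<Longrightarrow> le h l"
  and z_in: "z \<in> H"
  and z_le: "h \<in> H \<Longrightarrow> le z h"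
  and st_in: "h \<in> H \<Longrightarrow> st h \<in> H"
  and st_st: "h \<in> H \<Longrightarrow> st (st h) = h"
  and st_antimono: "h \<in> H \<Longrightarrow> k \<in> H \<Longrightarrow> le h k \<Longrightarrow> le (st k) (st h)"
  and le_st_self: "h \<in> H \<Longrightarrow> le h (st h) \<Longrightarrow> h = z"
  using poc_set unfolding poc_set_def by blast+

lemma st_antimono_iff: "h \<in> H \<Longrightarrow> k \<in> H \<Longrightarrow> le (st k) (st h) \<longleftrightarrow> le h k"
  by (metis st_antimono st_st st_in)

lemma le_st_z: "h \<in> H \<Longrightarrow> le h (st z)"
  by (metis st_antimono z_in z_le st_st st_in)

lemma st_z_le_iff: "h \<in> H \<Longrightarrow> le (st z) h \<longleftrightarrow> h = st z"
  by (metis le_st_z poc_antisym poc_refl st_in z_in)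

lemma st_le_self: "h \<in> H \<Longrightarrow> le (st h) h \<Longrightarrow> h = st z"
  by (metis le_st_self st_in st_st)

lemma ultrafilter_subset: "ultrafilter H le st \<xi> \<Longrightarrow> \<xi> \<subseteq> H"
  by (simp add: ultrafilter_def)

lemma ultrafilter_st_iff: "ultrafilter H le st \<xi> \<Longrightarrow> h \<in> H \<Longrightarrow> st h \<in> \<xi> \<longleftrightarrow> h \<notin> \<xi>"
  by (auto simp: ultrafilter_def)

lemma ultrafilter_consistent: "ultrafilter H le st \<xi> \<Longrightarrow> h \<in> \<xi> \<Longrightarrow> k \<in> \<xi> \<Longrightarrow> \<not> le h (st k)"
  unfolding ultrafilter_def by blast

lemma ultrafilter_z: "ultrafilter H le st \<xi> \<Longrightarrow> z \<notin> \<xi>"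
  using ultrafilter_consistent z_in z_le st_in by blast

lemma ultrafilter_ae_class_mem:
  "ultrafilter H le st \<xi> \<Longrightarrow> \<xi> \<in> ae_class H le st \<xi>"
  by (simp add: ae_class_def ultrafilters_def almost_eq_refl)

definition flip_below :: "'a set \<Rightarrow> 'a \<Rightarrow> 'a set" where
  "flip_below \<xi> g = (\<xi> - {h \<in> \<xi>. le h g}) \<union> st ` {h \<in> \<xi>. le h g}"

lemma flip_below_subset: "\<xi> \<subseteq> H \<Longrightarrow> flip_below \<xi> g \<subseteq> H"
  unfolding flip_below_def using st_in by blast

lemma mem_flip_below_iff:
  assumes "\<xi> \<subseteq> H" "x \<in> H"
  shows "x \<in> flip_below \<xi> g \<longleftrightarrow> (x \<in> \<xi> \<and> \<not> le x g) \<or> (st x \<in> \<xi> \<and> le (st x) g)"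
  using assms st_st unfolding flip_below_def by (auto intro!: image_eqI[of _ st "st x"])

lemma flip_below_consistent:
  assumes uf: "ultrafilter H le st \<xi>" and g: "g \<in> H" "g \<noteq> st z"
    and h: "h \<in> flip_below \<xi> g" and k: "k \<in> flip_below \<xi> g"
  shows "\<not> le h (st k)"
proof
  assume hk: "le h (st k)"
  have \<xi>H: "\<xi> \<subseteq> H"
    using ultrafilter_subset[OF uf] .
  then have hH: "h \<in> H" and kH: "k \<in> H"
    using h k flip_below_subset by auto
  consider "h \<in> \<xi>" "k \<in> \<xi>" | "\<not> le h g" "le (st k) g" | "\<not> le k g" "le (st h) g"
    | "le (st h) g" "le (st k) g"
    using h k mem_flip_below_iff[OF \<xi>H] hH kH by blast
  then show False
  proof cases
    case 1
    then show False
      using ultrafilter_consistent[OF uf] hk by blast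
  next
    case 2
    then show False
      using hk poc_trans hH kH g(1) st_in by blast
  next
    case 3
    have "le k (st h)"
      using st_antimono[OF hH st_in[OF kH] hk] st_st[OF kH] by simp
    then show False
      using 3 poc_trans[OF kH st_in[OF hH] g(1)] by blast
  next
    case 4
    have "le (st g) h"
      using st_antimono[OF st_in[OF hH] g(1) 4(1)] st_st[OF hH] by simp
    then have "le (st g) g"
      using poc_trans[OF st_in[OF g(1)] hH st_in[OF kH]] poc_trans[OF st_in[OF g(1)] st_in[OF kH] g(1)]
        hk 4(2)
      by blast
    then show False
      using st_le_self g by blast
  qed
qed

lemma ultrafilter_flip_below:
  assumes uf: "ultrafilter H le st \<xi>" and "g \<in> H" "g \<noteq> st z"
  shows "ultrafilter H le st (flip_below \<xi> g)"
  unfolding ultrafilter_def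
proof (intro conjI ballI)
  have \<xi>H: "\<xi> \<subseteq> H"
    using ultrafilter_subset[OF uf] .
  then show "flip_below \<xi> g \<subseteq> H"
    by (rule flip_below_subset)
  fix x assume "x \<in> H"
  then show "(x \<in> flip_below \<xi> g) \<noteq> (st x \<in> flip_below \<xi> g)"
    using mem_flip_below_iff[OF \<xi>H] st_in st_st ultrafilter_st_iff[OF uf] by auto
qed (use flip_below_consistent[OF assms] in blast)

lemma desc_chain_mem: "c \<in> desc_chains le B \<Longrightarrow> c n \<in> B"
  by (auto simp: desc_chains_def)

lemma desc_chain_in_H: "c \<in> desc_chains le B \<Longrightarrow> B \<subseteq> H \<Longrightarrow> c n \<in> H"
  by (auto simp: desc_chains_def)

lemma desc_chains_mono: "A \<subseteq> B \<Longrightarrow> desc_chains le A \<subseteq> desc_chains le B"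
  unfolding desc_chains_def by auto

lemma desc_chain_antimono:
  assumes c: "c \<in> desc_chains le B" and "B \<subseteq> H" and "m \<le> n"
  shows "le (c n) (c m)"
  using \<open>m \<le> n\<close>
proof (induction n rule: dec_induct)
  case base
  show ?case using poc_refl desc_chain_in_H[OF c \<open>B \<subseteq> H\<close>] by blast
next
  case (step n)
  moreover have "le (c (Suc n)) (c n)"
    using c by (simp add: desc_chains_def)
  ultimately show ?case
    using poc_trans desc_chain_in_H[OF c \<open>B \<subseteq> H\<close>] by blast
qed

lemma desc_chain_inj:
  assumes c: "c \<in> desc_chains le B" and "B \<subseteq> H"
  shows "inj c"
proof -
  have "c n \<noteq> c m" if "m < n" for m n
  proof
    assume "c n = c m"
    then have "le (c m) (c (Suc m))"
      using desc_chain_antimono[OF c \<open>B \<subseteq> H\<close>, of "Suc m" n] that by simp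
    moreover have "le (c (Suc m)) (c m)" "c (Suc m) \<noteq> c m"
      using c by (auto simp: desc_chains_def)
    ultimately show False
      using poc_antisym desc_chain_in_H[OF c \<open>B \<subseteq> H\<close>] by blast
  qed
  then show ?thesis
    by (metis injI linorder_neqE_nat)
qed

lemma desc_chain_infinite_image:
  "c \<in> desc_chains le B \<Longrightarrow> B \<subseteq> H \<Longrightarrow> infinite N \<Longrightarrow> infinite (c ` N)"
  using desc_chain_inj finite_imageD inj_on_subset by blast

lemma dominates_refl: "c \<in> desc_chains le B \<Longrightarrow> B \<subseteq> H \<Longrightarrow> dominates le c c"
  unfolding dominates_def using poc_refl desc_chain_in_H by blast

lemma dominates_trans:
  assumes "c \<in> desc_chains le B" "d \<in> desc_chains le B" "e \<in> desc_chains le B" "B \<subseteq> H"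
    and "dominates le c d" "dominates le d e"
  shows "dominates le c e"
  using assms poc_trans desc_chain_in_H unfolding dominates_def by metis

lemma chain_equiv_refl: "c \<in> desc_chains le B \<Longrightarrow> B \<subseteq> H \<Longrightarrow> chain_equiv le c c"
  by (simp add: chain_equiv_def dominates_refl)

lemma chain_equiv_sym: "chain_equiv le c d \<Longrightarrow> chain_equiv le d c"
  by (simp add: chain_equiv_def)

lemma chain_equiv_trans:
  "c \<in> desc_chains le B \<Longrightarrow> d \<in> desc_chains le B \<Longrightarrow> e \<in> desc_chains le B \<Longrightarrow> B \<subseteq> H
   \<Longrightarrow> chain_equiv le c d \<Longrightarrow> chain_equiv le d e \<Longrightarrow> chain_equiv le c e"
  unfolding chain_equiv_def by (meson dominates_trans)

lemma chain_class_eq_iff: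
  assumes "c \<in> desc_chains le B" "d \<in> desc_chains le B" "B \<subseteq> H"
  shows "chain_class le B c = chain_class le B d \<longleftrightarrow> chain_equiv le c d"
  using assms chain_equiv_refl chain_equiv_sym chain_equiv_trans[OF _ _ _ \<open>B \<subseteq> H\<close>]
  unfolding chain_class_def by blast

lemma chain_equiv_shift:
  assumes "d \<in> desc_chains le B" "B \<subseteq> H"
  shows "chain_equiv le d (\<lambda>m. d (m + N))"
  unfolding chain_equiv_def dominates_def
  using assms poc_refl desc_chain_in_H desc_chain_antimono[OF assms] le_add1 by blast

lemma chain_codim_subset:
  assumes "A \<subseteq> B" "B \<subseteq> H"
  defines "I \<equiv> chain_class le B ` desc_chains le A"
  shows "chain_codim le A = (if finite I then enat (card I) else \<infinity>)"
proof -
  have "bij_betw (\<lambda>X. chain_class le B (inv_into (desc_chains le A) (chain_class le A) X))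
      (chain_classes le A) I"
    unfolding chain_classes_eq_image I_def
  proof (rule bij_betw_images_same_kernel)
    fix c d assume cd: "c \<in> desc_chains le A" "d \<in> desc_chains le A"
    then have "c \<in> desc_chains le B" "d \<in> desc_chains le B"
      using desc_chains_mono[OF \<open>A \<subseteq> B\<close>] by auto
    then show "chain_class le A c = chain_class le A d \<longleftrightarrow> chain_class le B c = chain_class le B d"
      using chain_class_eq_iff[OF cd] chain_class_eq_iff[of c B d] assms by auto
  qed
  then show ?thesis
    unfolding chain_codim_def using bij_betw_finite bij_betw_same_card by metis
qed

lemma chain_class_image_eventually:
  assumes "A \<subseteq> B" "B \<subseteq> H"
    and tail: "\<And>d. d \<in> desc_chains le B \<Longrightarrow> eventually (\<lambda>m. d m \<in> A) sequentially"
  shows "chain_class le B ` desc_chains le A = chain_classes le B"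
  unfolding chain_classes_eq_image
proof
  show "chain_class le B ` desc_chains le A \<subseteq> chain_class le B ` desc_chains le B"
    using desc_chains_mono[OF \<open>A \<subseteq> B\<close>] by blast
next
  show "chain_class le B ` desc_chains le B \<subseteq> chain_class le B ` desc_chains le A"
  proof clarify
    fix d assume d: "d \<in> desc_chains le B"
    obtain N where N: "\<And>m. m \<ge> N \<Longrightarrow> d m \<in> A"
      using tail[OF d] by (auto simp: eventually_sequentially)
    have shift: "(\<lambda>m. d (m + N)) \<in> desc_chains le A"
      using d N by (auto simp: desc_chains_def)
    then have "chain_class le B d = chain_class le B (\<lambda>m. d (m + N))"
      using chain_class_eq_iff[OF d _ \<open>B \<subseteq> H\<close>] chain_equiv_shift[OF d \<open>B \<subseteq> H\<close>]
        desc_chains_mono[OF \<open>A \<subseteq> B\<close>] by blast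
    then show "chain_class le B d \<in> chain_class le B ` desc_chains le A"
      using shift by blast
  qed
qed

lemma chain_codim_eventually_in:
  assumes "A \<subseteq> B" "B \<subseteq> H"
    and "\<And>d. d \<in> desc_chains le B \<Longrightarrow> eventually (\<lambda>m. d m \<in> A) sequentially"
  shows "chain_codim le A = chain_codim le B"
  using chain_codim_subset[OF assms(1,2)] chain_class_image_eventually[OF assms]
  by (simp add: chain_codim_def)

lemma chain_codim_almost_eq:
  assumes "\<xi> \<subseteq> H" "\<eta> \<subseteq> H" "almost_eq \<xi> \<eta>"
  shows "chain_codim le \<xi> = chain_codim le \<eta>"
proof -
  have "chain_codim le (\<xi> \<inter> \<eta>) = chain_codim le B"
    if "B \<subseteq> H" "\<xi> \<inter> \<eta> \<subseteq> B" "finite (B - \<xi> \<inter> \<eta>)" for B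
  proof (rule chain_codim_eventually_in[OF that(2,1)])
    fix d assume d: "d \<in> desc_chains le B"
    show "eventually (\<lambda>m. d m \<in> \<xi> \<inter> \<eta>) sequentially"
      using inj_eventually_not_in[OF desc_chain_inj[OF d \<open>B \<subseteq> H\<close>] that(3)]
      by eventually_elim (use desc_chain_mem[OF d] in blast)
  qed
  moreover have "finite (\<xi> - \<xi> \<inter> \<eta>)" "finite (\<eta> - \<xi> \<inter> \<eta>)"
    using \<open>almost_eq \<xi> \<eta>\<close> by (auto simp: almost_eq_def Diff_Int)
  ultimately show ?thesis
    using assms by (metis inf_le1 inf_le2)
qed

lemma codim_ae_class:
  assumes "ultrafilter H le st \<xi>"
  shows "codim le (ae_class H le st \<xi>) = chain_codim le \<xi>"
proof -
  let ?\<eta> = "SOME \<eta>. \<eta> \<in> ae_class H le st \<xi>"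
  have "?\<eta> \<in> ae_class H le st \<xi>"
    using ultrafilter_ae_class_mem[OF assms] by (rule someI)
  then have "ultrafilter H le st ?\<eta>" "almost_eq \<xi> ?\<eta>"
    by (auto simp: ae_class_def ultrafilters_def)
  then show ?thesis
    using chain_codim_almost_eq ultrafilter_subset assms codim_eq_chain_codim by metis
qed

lemma desc_chain_Suc_not_top:
  assumes c: "c \<in> desc_chains le B" and "B \<subseteq> H"
  shows "c (Suc n) \<noteq> st z"
proof
  assume "c (Suc n) = st z"
  then have "le (c n) (c (Suc n))"
    using le_st_z desc_chain_in_H[OF c \<open>B \<subseteq> H\<close>] by simp
  moreover have "le (c (Suc n)) (c n)" "c (Suc n) \<noteq> c n"
    using c by (auto simp: desc_chains_def)
  ultimately show False
    using poc_antisym desc_chain_in_H[OF c \<open>B \<subseteq> H\<close>] by blast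
qed

lemma incomparable_below_transverse:
  assumes uf: "ultrafilter H le st \<xi>" and "x \<in> \<xi>" "y \<in> \<xi>"
    and g: "g \<in> H" "g \<noteq> st z" and "le x g" "le y g"
    and incomparable: "\<not> le x y" "\<not> le y x"
  shows "transverse le st x y"
proof -
  have xH: "x \<in> H" and yH: "y \<in> H"
    using assms ultrafilter_subset by auto
  have "\<not> le (st x) y"
  proof
    assume "le (st x) y"
    then have "le (st y) x"
      using st_antimono[OF st_in[OF xH] yH] st_st[OF xH] by simp
    moreover have "le (st g) (st y)"
      using st_antimono[OF yH g(1) \<open>le y g\<close>] .
    ultimately have "le (st g) g"
      using poc_trans \<open>le x g\<close> xH yH g(1) st_in by meson
    then show False
      using st_le_self g by blast
  qed
  then show ?thesis
    unfolding transverse_def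
    using incomparable ultrafilter_consistent[OF uf \<open>x \<in> \<xi>\<close> \<open>y \<in> \<xi>\<close>] st_antimono_iff[OF yH xH]
    by blast
qed

lemma exists_maximal_chain:
  assumes "B \<subseteq> H" "finite (chain_classes le B)" "desc_chains le B \<noteq> {}"
  shows "\<exists>c \<in> desc_chains le B. \<forall>d \<in> desc_chains le B. dominates le d c \<longrightarrow> dominates le c d"
proof -
  \<comment> \<open>Passing to a chain that strictly dominates shrinks this finite set of classes.\<close>
  define above where "above c = {X \<in> chain_classes le B. \<exists>d\<in>X. dominates le d c}" for c
  obtain c where c: "c \<in> desc_chains le B"
    and least: "\<And>d. d \<in> desc_chains le B \<Longrightarrow> card (above c) \<le> card (above d)"
    using ex_has_least_nat[of "\<lambda>c. c \<in> desc_chains le B" _ "\<lambda>c. card (above c)"] assms(3) by blast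
  have "dominates le c d" if d: "d \<in> desc_chains le B" and "dominates le d c" for d
  proof (rule ccontr)
    assume not_dom: "\<not> dominates le c d"
    have class_chains: "X \<subseteq> desc_chains le B" if "X \<in> chain_classes le B" for X
      using that by (auto simp: chain_classes_eq_image chain_class_def)
    have "above d \<subseteq> above c"
      using dominates_trans[OF _ d c \<open>B \<subseteq> H\<close> _ \<open>dominates le d c\<close>] class_chains
      unfolding above_def by blast
    moreover have "chain_class le B c \<in> above c - above d"
    proof -
      have "chain_class le B c \<in> chain_classes le B" "c \<in> chain_class le B c"
        using c chain_equiv_refl[OF c \<open>B \<subseteq> H\<close>] by (auto simp: chain_classes_eq_image chain_class_def)
      moreover have "\<not> dominates le e d" if "e \<in> chain_class le B c" for e
        using that not_dom dominates_trans[OF c _ d \<open>B \<subseteq> H\<close>]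
        by (auto simp: chain_class_def chain_equiv_def)
      ultimately show ?thesis
        using dominates_refl[OF c \<open>B \<subseteq> H\<close>] unfolding above_def by blast
    qed
    moreover have "finite (above c)"
      using \<open>finite (chain_classes le B)\<close> by (simp add: above_def)
    ultimately have "card (above d) < card (above c)"
      by (metis Diff_iff psubset_card_mono psubsetI)
    then show False
      using least[OF d] by simp
  qed
  then show ?thesis
    using c by blast
qed

end

locale discrete_omega_pocset = pocset +
  assumes discrete: "discrete_poc H le z st"
    and omega_dim: "omega_dimensional H le st"
begin

lemma finite_interval:
  "proper H z st h \<Longrightarrow> proper H z st k \<Longrightarrow> finite {x \<in> H. le h x \<and> le x k}"
  using discrete by (simp add: discrete_poc_def)

lemma desc_chain_eventually_not_above:
  assumes c: "c \<in> desc_chains le B" and "B \<subseteq> H" "z \<notin> B"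
    and h: "h \<in> H" "h \<noteq> z"
  shows "eventually (\<lambda>m. \<not> le h (c m)) sequentially"
proof (rule ccontr)
  have cH: "c n \<in> H" for n
    using desc_chain_in_H[OF c \<open>B \<subseteq> H\<close>] .
  assume "\<not> eventually (\<lambda>m. \<not> le h (c m)) sequentially"
  then have frequently: "\<exists>m'\<ge>m. le h (c m')" for m
    unfolding eventually_sequentially by blast
  have above: "le h (c m)" for m
  proof -
    obtain m' where "m' \<ge> m" "le h (c m')"
      using frequently by blast
    then show ?thesis
      using desc_chain_antimono[OF c \<open>B \<subseteq> H\<close>] poc_trans[OF h(1) cH cH] by blast
  qed
  have "proper H z st (c 1)"
    using cH desc_chain_mem[OF c] \<open>z \<notin> B\<close> desc_chain_Suc_not_top[OF c \<open>B \<subseteq> H\<close>, of 0]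
    unfolding proper_def by force
  moreover have "proper H z st h"
    using h above[of 1] st_z_le_iff cH \<open>proper H z st (c 1)\<close> unfolding proper_def by auto
  ultimately have "finite {x \<in> H. le h x \<and> le x (c 1)}"
    using finite_interval by blast
  moreover have "c ` {1..} \<subseteq> {x \<in> H. le h x \<and> le x (c 1)}"
    using above cH desc_chain_antimono[OF c \<open>B \<subseteq> H\<close>] by auto
  ultimately show False
    using desc_chain_infinite_image[OF c \<open>B \<subseteq> H\<close> infinite_Ici] finite_subset by blast
qed

lemma exists_infinite_comparable_subset:
  assumes uf: "ultrafilter H le st \<xi>" and g: "g \<in> H" "g \<noteq> st z"
    and T: "T \<subseteq> {h \<in> \<xi>. le h g}" "infinite T"
  shows "\<exists>Y \<subseteq> T. infinite Y \<and> (\<forall>x \<in> Y. \<forall>y \<in> Y. le x y \<or> le y x)"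
proof -
  have TH: "T \<subseteq> H"
    using T(1) ultrafilter_subset[OF uf] by blast
  define colour where "colour X = (if \<forall>a\<in>X. \<forall>b\<in>X. le a b \<or> le b a then 0 else 1::nat)" for X
  have "\<forall>x\<in>T. \<forall>y\<in>T. x \<noteq> y \<longrightarrow> colour {x, y} < 2"
    by (simp add: colour_def)
  from Ramsey2[OF T(2) this] obtain Y t where Y: "Y \<subseteq> T" "infinite Y"
    and homogeneous: "\<forall>x\<in>Y. \<forall>y\<in>Y. x \<noteq> y \<longrightarrow> colour {x, y} = t"
    by blast
  have "le x y \<or> le y x" if "x \<in> Y" "y \<in> Y" for x y
  proof (rule ccontr)
    assume incomparable: "\<not> (le x y \<or> le y x)"
    then have "x \<noteq> y"
      using poc_refl that Y(1) TH by blast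
    then have "colour {x, y} = 1"
      using incomparable unfolding colour_def by auto
    then have "t = 1"
      using homogeneous that \<open>x \<noteq> y\<close> by simp
    have "transverse le st x' y'" if "x' \<in> Y" "y' \<in> Y" "x' \<noteq> y'" for x' y'
    proof -
      have "colour {x', y'} = 1"
        using homogeneous that \<open>t = 1\<close> by blast
      then have "\<not> (\<forall>a\<in>{x', y'}. \<forall>b\<in>{x', y'}. le a b \<or> le b a)"
        unfolding colour_def by (metis zero_neq_one)
      then have "\<not> le x' y'" "\<not> le y' x'"
        using poc_refl that(1,2) Y(1) TH by auto
      moreover have "x' \<in> \<xi>" "y' \<in> \<xi>" "le x' g" "le y' g"
        using that Y(1) T(1) by auto
      ultimately show ?thesis
        using incomparable_below_transverse[OF uf _ _ g] by blast
    qed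
    then show False
      using omega_dim Y TH unfolding omega_dimensional_def by blast
  qed
  then show ?thesis
    using Y by blast
qed

lemma infinite_below_has_desc_chain:
  assumes uf: "ultrafilter H le st \<xi>" and g: "g \<in> \<xi>" "g \<noteq> st z"
    and T: "T \<subseteq> {h \<in> \<xi>. le h g}" "infinite T"
  shows "\<exists>e \<in> desc_chains le \<xi>. range e \<subseteq> T"
proof -
  have \<xi>H: "\<xi> \<subseteq> H" and gH: "g \<in> H"
    using ultrafilter_subset[OF uf] g by auto
  obtain Y where Y: "Y \<subseteq> T" "infinite Y" and total: "\<forall>x \<in> Y. \<forall>y \<in> Y. le x y \<or> le y x"
    using exists_infinite_comparable_subset[OF uf gH g(2) T] by blast
  have upfinite: "finite {x \<in> Y. le y x}" if "y \<in> Y" for y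
  proof (rule finite_subset)
    show "{x \<in> Y. le y x} \<subseteq> {x \<in> H. le y x \<and> le x g}"
      using Y(1) T(1) \<xi>H by auto
    have "y \<in> \<xi>" "le y g"
      using that Y(1) T(1) by auto
    then have "proper H z st y" "proper H z st g"
      using ultrafilter_z[OF uf] g gH \<xi>H st_z_le_iff unfolding proper_def by auto
    then show "finite {x \<in> H. le y x \<and> le x g}"
      using finite_interval by blast
  qed
  obtain e where e: "range e \<subseteq> Y" "\<forall>n. le (e (Suc n)) (e n) \<and> e (Suc n) \<noteq> e n"
    using infinite_total_upfinite_has_desc_chain[of Y le] total upfinite Y(2) by blast
  then have "e \<in> desc_chains le \<xi>"
    using Y(1) T(1) unfolding desc_chains_def by blast
  then show ?thesis
    using e(1) Y(1) by blast
qed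

end

locale maximal_chain = discrete_omega_pocset +
  fixes \<xi> :: "'a set" and c :: "nat \<Rightarrow> 'a"
  assumes ultrafilter: "ultrafilter H le st \<xi>"
    and finite_classes: "finite (chain_classes le \<xi>)"
    and chain: "c \<in> desc_chains le \<xi>"
    and maximal: "\<And>d. d \<in> desc_chains le \<xi> \<Longrightarrow> dominates le d c \<Longrightarrow> dominates le c d"
begin

definition below :: "nat \<Rightarrow> 'a set" where
  "below k = {h \<in> \<xi>. le h (c k)}"

definition flipped :: "nat \<Rightarrow> 'a set" where
  "flipped k = (\<xi> - below k) \<union> st ` below k"

lemma \<xi>_subset: "\<xi> \<subseteq> H"
  using ultrafilter ultrafilter_subset by blast

lemma chain_in_H: "c k \<in> H"
  using desc_chain_in_H[OF chain \<xi>_subset] .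

lemma chain_antimono: "k \<le> k' \<Longrightarrow> le (c k') (c k)"
  using desc_chain_antimono[OF chain \<xi>_subset] .

lemma below_antimono: "k \<le> k' \<Longrightarrow> below k' \<subseteq> below k"
  unfolding below_def using chain_antimono poc_trans chain_in_H \<xi>_subset by blast

lemma chain_not_top: "k \<ge> 1 \<Longrightarrow> c k \<noteq> st z"
  using desc_chain_Suc_not_top[OF chain \<xi>_subset, of "k - 1"] by simp

lemma ultrafilter_flipped:
  assumes "k \<ge> 1"
  shows "ultrafilter H le st (flipped k)"
proof -
  have "c k \<noteq> st z"
    using chain_not_top[OF assms] .
  moreover have "flipped k = flip_below \<xi> (c k)"
    unfolding flipped_def below_def flip_below_def ..
  ultimately show ?thesis
    using ultrafilter_flip_below[OF ultrafilter chain_in_H] by simp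
qed

lemma flipped_subset: "flipped k \<subseteq> H"
  unfolding flipped_def below_def using \<xi>_subset st_in by blast

lemma inequivalent_chain_eventually_not_below:
  assumes d: "d \<in> desc_chains le \<xi>" and "\<not> chain_equiv le c d"
  shows "eventually (\<lambda>k. \<forall>m. \<not> le (d m) (c k)) sequentially"
proof -
  obtain K where K: "\<And>m. \<not> le (d m) (c K)"
    using assms maximal[OF d] unfolding chain_equiv_def dominates_def by blast
  have "\<forall>m. \<not> le (d m) (c k)" if "k \<ge> K" for k
    using K chain_antimono[OF that] poc_trans desc_chain_in_H[OF d \<xi>_subset] chain_in_H by blast
  then show ?thesis
    unfolding eventually_sequentially by blast
qed

lemma other_class_eventually_not_below:
  assumes X: "X \<in> chain_classes le \<xi> - {chain_class le \<xi> c}"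
  shows "eventually (\<lambda>k. \<forall>d \<in> X. \<forall>m. \<not> le (d m) (c k)) sequentially"
proof -
  obtain d0 where d0: "d0 \<in> desc_chains le \<xi>" "X = chain_class le \<xi> d0"
    using X by (auto simp: chain_classes_eq_image)
  then have "\<not> chain_equiv le c d0"
    using X chain_class_eq_iff[OF chain d0(1) \<xi>_subset] by auto
  with d0(1) have "eventually (\<lambda>k. \<forall>m. \<not> le (d0 m) (c k)) sequentially"
    by (rule inequivalent_chain_eventually_not_below)
  then show ?thesis
  proof eventually_elim
    case (elim k)
    show ?case
    proof (intro ballI allI notI)
      fix d m assume "d \<in> X" and below: "le (d m) (c k)"
      then have d: "d \<in> desc_chains le \<xi>" and "dominates le d0 d"
        using d0 by (auto simp: chain_class_def chain_equiv_def)
      then obtain n where "le (d0 n) (d m)"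
        unfolding dominates_def by blast
      then have "le (d0 n) (c k)"
        using below poc_trans desc_chain_in_H[OF _ \<xi>_subset] d d0(1) chain_in_H by blast
      then show False
        using elim by blast
    qed
  qed
qed

definition absorbing :: "nat \<Rightarrow> bool" where
  "absorbing k \<longleftrightarrow> (\<forall>d \<in> desc_chains le \<xi>. \<forall>m. le (d m) (c k) \<longrightarrow> chain_equiv le c d)"

lemma eventually_absorbing: "eventually absorbing sequentially"
proof -
  have "eventually (\<lambda>k. \<forall>X \<in> chain_classes le \<xi> - {chain_class le \<xi> c}.
      \<forall>d \<in> X. \<forall>m. \<not> le (d m) (c k)) sequentially"
    using finite_classes other_class_eventually_not_below by (simp add: eventually_ball_finite)
  then show ?thesis
  proof eventually_elim
    case (elim k)
    show ?case
      unfolding absorbing_def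
    proof (intro ballI allI impI)
      fix d m assume d: "d \<in> desc_chains le \<xi>" and "le (d m) (c k)"
      have "chain_class le \<xi> d \<in> chain_classes le \<xi>" "d \<in> chain_class le \<xi> d"
        using d chain_equiv_refl[OF d \<xi>_subset] by (auto simp: chain_classes_eq_image chain_class_def)
      then have "chain_class le \<xi> d = chain_class le \<xi> c"
        using elim \<open>le (d m) (c k)\<close> by blast
      then show "chain_equiv le c d"
        using chain_class_eq_iff[OF d chain \<xi>_subset] chain_equiv_sym by blast
    qed
  qed
qed

lemma below_step_finite:
  assumes "absorbing k" "k \<ge> 1"
  shows "finite (below k - below (Suc k))"
proof (rule ccontr)
  assume infinite: "infinite (below k - below (Suc k))"
  have "c k \<noteq> st z"
    using chain_not_top[OF \<open>k \<ge> 1\<close>] .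
  moreover have "below k - below (Suc k) \<subseteq> {h \<in> \<xi>. le h (c k)}"
    unfolding below_def by blast
  ultimately obtain e where e: "e \<in> desc_chains le \<xi>" "range e \<subseteq> below k - below (Suc k)"
    using infinite_below_has_desc_chain[OF ultrafilter desc_chain_mem[OF chain] _ _ infinite]
    by blast
  then have "chain_equiv le c e"
    using \<open>absorbing k\<close> unfolding absorbing_def below_def by blast
  then obtain n where "le (e n) (c (Suc k))"
    unfolding chain_equiv_def dominates_def by blast
  then show False
    using e desc_chain_mem[OF e(1)] unfolding below_def by blast
qed

lemma eventually_below_diff_finite:
  "eventually (\<lambda>K. \<forall>k \<ge> K. finite (below K - below k)) sequentially"
proof -
  have "eventually (\<lambda>k. absorbing k \<and> k \<ge> 1) sequentially"
    using eventually_absorbing eventually_ge_at_top[of 1] by (rule eventually_conj)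
  then obtain N where N: "\<And>k. k \<ge> N \<Longrightarrow> finite (below k - below (Suc k))"
    using below_step_finite unfolding eventually_sequentially by blast
  have "finite (below K - below k)" if "N \<le> K" "K \<le> k" for K k
    using \<open>K \<le> k\<close>
  proof (induction k rule: dec_induct)
    case (step k)
    have "below K - below (Suc k) \<subseteq> (below K - below k) \<union> (below k - below (Suc k))"
      by blast
    then show ?case
      using step.IH N[of k] step.hyps \<open>N \<le> K\<close> finite_subset by auto
  qed simp
  then show ?thesis
    unfolding eventually_sequentially by blast
qed

lemma almost_eq_flipped:
  assumes "finite (below K - below k)" "K \<le> k"
  shows "almost_eq (flipped K) (flipped k)"
  unfolding almost_eq_def
proof (rule finite_subset)
  have "\<forall>h \<in> \<xi>. st h \<notin> \<xi>"
    using ultrafilter_st_iff[OF ultrafilter] \<xi>_subset by blast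
  then show "(flipped K - flipped k) \<union> (flipped k - flipped K)
      \<subseteq> (below K - below k) \<union> st ` (below K - below k)"
    using below_antimono[OF \<open>K \<le> k\<close>] unfolding flipped_def below_def by blast
qed (use assms in simp)

lemma not_almost_eq_flipped: "\<not> almost_eq \<xi> (flipped k)"
proof
  have "\<forall>h \<in> \<xi>. st h \<notin> \<xi>"
    using ultrafilter_st_iff[OF ultrafilter] \<xi>_subset by blast
  then have "below k \<subseteq> \<xi> - flipped k"
    unfolding below_def flipped_def by blast
  moreover have "c ` {k..} \<subseteq> below k"
    unfolding below_def using desc_chain_mem[OF chain] chain_antimono by auto
  ultimately have "c ` {k..} \<subseteq> \<xi> - flipped k"
    by (rule order.trans[rotated])
  then have "infinite (\<xi> - flipped k)"
    using desc_chain_infinite_image[OF chain \<xi>_subset infinite_Ici] by (rule infinite_super)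
  moreover assume "almost_eq \<xi> (flipped k)"
  ultimately show False
    unfolding almost_eq_def by blast
qed

lemma flipped_Int_eq:
  assumes "F \<subseteq> H" and not_below: "\<forall>h \<in> \<xi> \<inter> (F \<union> st ` F). \<not> le h (c k)"
  shows "flipped k \<inter> F = \<xi> \<inter> F"
proof -
  have "x \<notin> st ` below k" if "x \<in> F" for x
  proof
    assume "x \<in> st ` below k"
    then obtain h where "h \<in> below k" "x = st h"
      by blast
    moreover have "h = st x"
      using calculation \<xi>_subset st_st unfolding below_def by auto
    ultimately show False
      using not_below that unfolding below_def by blast
  qed
  moreover have "x \<notin> below k" if "x \<in> F" for x
    using not_below that unfolding below_def by blast
  ultimately show ?thesis
    unfolding flipped_def by blast
qed

lemma in_closure_flipped:
  assumes "K \<ge> 1" and finite_diff: "\<forall>k \<ge> K. finite (below K - below k)"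
  shows "\<xi> \<in> uclosure H le st (ae_class H le st (flipped K))"
  unfolding uclosure_def
proof (intro CollectI conjI allI impI)
  show "\<xi> \<in> ultrafilters H le st"
    using ultrafilter by (simp add: ultrafilters_def)
next
  fix F assume F: "finite F \<and> F \<subseteq> H"
  let ?G = "\<xi> \<inter> (F \<union> st ` F)"
  have "eventually (\<lambda>k. \<forall>h \<in> ?G. \<not> le h (c k)) sequentially"
  proof (rule eventually_ball_finite)
    show "finite ?G"
      using F by blast
    show "\<forall>h \<in> ?G. eventually (\<lambda>k. \<not> le h (c k)) sequentially"
      using desc_chain_eventually_not_above[OF chain \<xi>_subset ultrafilter_z[OF ultrafilter]]
        ultrafilter_z[OF ultrafilter] \<xi>_subset by blast
  qed
  with eventually_ge_at_top[of K]
  have "eventually (\<lambda>k. K \<le> k \<and> (\<forall>h \<in> ?G. \<not> le h (c k))) sequentially"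
    by (rule eventually_conj)
  then obtain k where k: "k \<ge> K" "\<forall>h \<in> ?G. \<not> le h (c k)"
    unfolding eventually_sequentially by blast
  then have "flipped k \<in> ae_class H le st (flipped K)"
    using ultrafilter_flipped \<open>K \<ge> 1\<close> almost_eq_flipped finite_diff
    by (simp add: ae_class_def ultrafilters_def)
  moreover have "flipped k \<inter> F = \<xi> \<inter> F"
    using flipped_Int_eq F k(2) by blast
  ultimately show "\<exists>\<eta> \<in> ae_class H le st (flipped K). \<eta> \<inter> F = \<xi> \<inter> F"
    by blast
qed

lemma chain_class_image_below_removed:
  assumes "absorbing K"
  shows "chain_class le \<xi> ` desc_chains le (\<xi> - below K) = chain_classes le \<xi> - {chain_class le \<xi> c}"
proof (intro equalityI subsetI)
  fix X assume "X \<in> chain_class le \<xi> ` desc_chains le (\<xi> - below K)"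
  then obtain d where d: "d \<in> desc_chains le (\<xi> - below K)" "X = chain_class le \<xi> d"
    by blast
  then have d\<xi>: "d \<in> desc_chains le \<xi>"
    using desc_chains_mono[of "\<xi> - below K" \<xi>] by blast
  have "\<not> chain_equiv le d c"
  proof
    assume "chain_equiv le d c"
    then obtain n where "le (d n) (c K)"
      unfolding chain_equiv_def dominates_def by blast
    then show False
      using desc_chain_mem[OF d(1)] unfolding below_def by blast
  qed
  then show "X \<in> chain_classes le \<xi> - {chain_class le \<xi> c}"
    using d d\<xi> chain_class_eq_iff[OF d\<xi> chain \<xi>_subset] by (auto simp: chain_classes_eq_image)
next
  fix X assume X: "X \<in> chain_classes le \<xi> - {chain_class le \<xi> c}"
  then obtain d where d: "d \<in> desc_chains le \<xi>" "X = chain_class le \<xi> d"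
    by (auto simp: chain_classes_eq_image)
  then have "\<not> chain_equiv le c d"
    using X chain_class_eq_iff[OF chain d(1) \<xi>_subset] by auto
  then have "d \<in> desc_chains le (\<xi> - below K)"
    using d(1) \<open>absorbing K\<close> unfolding absorbing_def below_def desc_chains_def by blast
  then show "X \<in> chain_class le \<xi> ` desc_chains le (\<xi> - below K)"
    using d(2) by blast
qed

lemma chain_codim_below_removed:
  assumes "absorbing K"
  shows "chain_codim le (\<xi> - below K) = enat (card (chain_classes le \<xi>) - 1)"
proof -
  have "chain_class le \<xi> c \<in> chain_classes le \<xi>"
    using chain by (simp add: chain_classes_eq_image)
  then show ?thesis
    using chain_codim_subset[OF Diff_subset \<xi>_subset] finite_classes
    by (simp add: chain_class_image_below_removed[OF assms])
qed

lemma chain_codim_flipped: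
  assumes "K \<ge> 1"
  shows "chain_codim le (flipped K) = chain_codim le (\<xi> - below K)"
proof (rule sym, rule chain_codim_eventually_in)
  show "\<xi> - below K \<subseteq> flipped K" "flipped K \<subseteq> H"
    using flipped_subset by (auto simp: flipped_def)
  have top: "st (c K) \<in> H" "st (c K) \<noteq> z"
    using st_in[OF chain_in_H] st_st[OF chain_in_H] chain_not_top[OF assms] by auto
  have z: "z \<notin> flipped K"
    using ultrafilter_z[OF ultrafilter_flipped[OF assms]] .
  fix e assume e: "e \<in> desc_chains le (flipped K)"
  show "eventually (\<lambda>m. e m \<in> \<xi> - below K) sequentially"
    using desc_chain_eventually_not_above[OF e flipped_subset z top]
  proof eventually_elim
    case (elim m)
    have "e m \<notin> st ` below K"
    proof
      assume "e m \<in> st ` below K"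
      then obtain h where "h \<in> \<xi>" "le h (c K)" "e m = st h"
        unfolding below_def by blast
      then show False
        using elim st_antimono[OF _ chain_in_H] \<xi>_subset by auto
    qed
    then show ?case
      using desc_chain_mem[OF e] unfolding flipped_def by blast
  qed
qed

end

context discrete_omega_pocset
begin

lemma exists_ultrafilter_codim_pred:
  assumes uf: "ultrafilter H le st \<xi>" and codim: "chain_codim le \<xi> = enat \<delta>" and "\<delta> > 0"
  shows "\<exists>\<eta>. ultrafilter H le st \<eta> \<and> \<not> almost_eq \<xi> \<eta>
    \<and> \<xi> \<in> uclosure H le st (ae_class H le st \<eta>) \<and> chain_codim le \<eta> = enat (\<delta> - 1)"
proof -
  have finite: "finite (chain_classes le \<xi>)" and card: "card (chain_classes le \<xi>) = \<delta>"
    using codim by (auto simp: chain_codim_def split: if_splits)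
  then have "desc_chains le \<xi> \<noteq> {}"
    using \<open>\<delta> > 0\<close> by (auto simp: chain_classes_eq_image)
  then obtain c where "c \<in> desc_chains le \<xi>"
    and "\<forall>d \<in> desc_chains le \<xi>. dominates le d c \<longrightarrow> dominates le c d"
    using exists_maximal_chain[OF ultrafilter_subset[OF uf] finite] by blast
  then interpret maximal_chain H le z st \<xi> c
    using uf finite by unfold_locales blast+
  have "eventually (\<lambda>K. K \<ge> 1 \<and> absorbing K \<and> (\<forall>k \<ge> K. finite (below K - below k))) sequentially"
    using eventually_ge_at_top eventually_absorbing eventually_below_diff_finite
    by (intro eventually_conj)
  then obtain K where K: "K \<ge> 1" "absorbing K" "\<forall>k \<ge> K. finite (below K - below k)"
    unfolding eventually_sequentially by blast
  then have "chain_codim le (flipped K) = enat (\<delta> - 1)"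
    using chain_codim_flipped chain_codim_below_removed card by simp
  then show ?thesis
    using K ultrafilter_flipped not_almost_eq_flipped in_closure_flipped by blast
qed

end

theorem mainTheorem17:
  fixes H :: "'a set" and le :: "'a \<Rightarrow> 'a \<Rightarrow> bool" and z :: 'a and st :: "'a \<Rightarrow> 'a"
    and S :: "'a set set" and \<delta> :: nat
  assumes "poc_set H le z st"
    and "discrete_poc H le z st"
    and "omega_dimensional H le st"
    and "S \<in> ReH H le st"
    and "codim le S = enat \<delta>"
    and "\<delta> > 0"
  shows "\<exists>S1 \<in> ReH H le st. Re_less H le st S1 S \<and> codim le S1 = enat (\<delta> - 1)"
proof -
  interpret discrete_omega_pocset H le z st
    using assms(1-3) by unfold_locales
  obtain \<xi> where \<xi>: "ultrafilter H le st \<xi>" and S: "S = ae_class H le st \<xi>"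
    using assms(4) by (auto simp: ReH_eq_image ultrafilters_def)
  obtain \<eta> where \<eta>: "ultrafilter H le st \<eta>" and "\<not> almost_eq \<xi> \<eta>"
    and closure: "\<xi> \<in> uclosure H le st (ae_class H le st \<eta>)"
    and codim: "chain_codim le \<eta> = enat (\<delta> - 1)"
    using exists_ultrafilter_codim_pred[OF \<xi> _ \<open>\<delta> > 0\<close>] assms(5) codim_ae_class[OF \<xi>] S by auto
  have "\<xi> \<in> S" "\<xi> \<notin> ae_class H le st \<eta>"
    using S ultrafilter_ae_class_mem[OF \<xi>] \<open>\<not> almost_eq \<xi> \<eta>\<close> almost_eq_sym
    by (auto simp: ae_class_def)
  then have "Re_less H le st (ae_class H le st \<eta>) S"
    using closure unfolding Re_less_def Re_le_def by blast
  moreover have "ae_class H le st \<eta> \<in> ReH H le st"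
    using \<eta> by (simp add: ReH_eq_image ultrafilters_def)
  ultimately show ?thesis
    using codim_ae_class[OF \<eta>] codim by auto
qed

end
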